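(* Let $n\ge 2$ be an integer and let $Q_{4n}=\langle x,y : x^{2n}=1,\ x^n=y^2,\ yx=x^{-1}y\rangle$ be the generalized quaternion group of order $4n$. Let $\Gamma_{Q_{4n}}$ be its non-commuting graph. Then the spectrum of the distance matrix $D(\Gamma_{Q_{4n}})$ (eigenvalues counted with multiplicity, multiplicities being added if two of the listed values coincide) consists of: (a) $-2$ with multiplicity $3n-3$; (b) $0$ with multiplicity $n-1$; (c) $3(n-1)+\sqrt{5n^2-10n+9}$ and $3(n-1)-\sqrt{5n^2-10n+9}$, each with multiplicity $1$.
   Context: For a finite non-abelian group $G$ with centre $Z(G)$, the non-commuting graph $\Gamma_G$ is the simple undirected graph with vertex set $G\setminus Z(G)$, in which two distinct vertices $u,v$ are adjacent if and only if $uv\ne vu$. For a connected graph $H$, $d_{uv}$ denotes the length of a shortest path between vertices $u$ and $v$, and the distance matrix $D(H)$ is the matrix whose $(u,v)$-entry is $d_{uv}$. *)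

theory Defs
  imports "HOL-Algebra.Generated_Groups" "Jordan_Normal_Form.Char_Poly"
begin

definition grp_center :: "('a, 'b) monoid_scheme \<Rightarrow> 'a set" where
  "grp_center G = {z \<in> carrier G. \<forall>g \<in> carrier G. z \<otimes>\<^bsub>G\<^esub> g = g \<otimes>\<^bsub>G\<^esub> z}"

definition nc_vertices :: "('a, 'b) monoid_scheme \<Rightarrow> 'a set" where
  "nc_vertices G = carrier G - grp_center G"

definition nc_adj :: "('a, 'b) monoid_scheme \<Rightarrow> 'a \<Rightarrow> 'a \<Rightarrow> bool" where
  "nc_adj G u v \<longleftrightarrow> u \<in> nc_vertices G \<and> v \<in> nc_vertices G \<and> u \<noteq> v
     \<and> u \<otimes>\<^bsub>G\<^esub> v \<noteq> v \<otimes>\<^bsub>G\<^esub> u"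

definition nc_walk :: "('a, 'b) monoid_scheme \<Rightarrow> 'a list \<Rightarrow> bool" where
  "nc_walk G p \<longleftrightarrow> p \<noteq> [] \<and> set p \<subseteq> nc_vertices G
     \<and> (\<forall>i. Suc i < length p \<longrightarrow> nc_adj G (p ! i) (p ! Suc i))"

text \<open>Distance d_uv: length of a shortest path (= shortest walk) from u to v.\<close>
definition nc_dist :: "('a, 'b) monoid_scheme \<Rightarrow> 'a \<Rightarrow> 'a \<Rightarrow> nat" where
  "nc_dist G u v = (LEAST k. \<exists>p. nc_walk G p \<and> hd p = u \<and> last p = v \<and> length p = Suc k)"

definition nc_dist_matrix :: "('a, 'b) monoid_scheme \<Rightarrow> 'a list \<Rightarrow> real mat" where
  "nc_dist_matrix G vs = mat (length vs) (length vs) (\<lambda>(i, j). real (nc_dist G (vs ! i) (vs ! j)))"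

end

theory Submission
  imports Defs
begin

text \<open>The non-central elements of \<open>Q\<^sub>4\<^sub>n\<close> are the \<open>2n - 2\<close> powers \<open>x\<^sup>a\<close> with \<open>a \<noteq> 0, n\<close>,
  which commute with each other and with no \<open>x\<^sup>b y\<close>, and the \<open>2n\<close> elements \<open>x\<^sup>b y\<close>, each of which
  commutes only with \<open>x\<^sup>b\<^sup>+\<^sup>n y\<close>. So the non-commuting graph is the complete multipartite graph
  with one part of size \<open>p = 2n - 2\<close> and \<open>q = n\<close> parts of size two, and its distance matrix is
  \<open>J + B - 2I\<close>, where \<open>B\<close> is the all-ones matrix on each part. An explicit orthogonal eigenbasis
  diagonalises it: contrasts inside the big part and differences inside the pairs (eigenvalue \<open>-2\<close>),
  contrasts across the pairs that are constant on each pair (eigenvalue \<open>0\<close>), and two vectors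
  constant on the big part and on its complement, whose eigenvalues are the roots of
  \<open>\<mu>\<^sup>2 - (2p + 2q - 2)\<mu> + 2pq - 4q\<close>.\<close>

section \<open>Diagonalisation by an orthogonal eigenbasis\<close>

lemma scalar_prod_self_pos_real:
  fixes v :: "real vec"
  assumes "v \<in> carrier_vec n" "v \<noteq> 0\<^sub>v n"
  shows "v \<bullet> v > 0"
  using conjugate_square_greater_0_vec[OF assms(1)] assms by simp

lemma det_ne_zero_if_orthogonal_cols:
  fixes S :: "real mat"
  assumes S: "S \<in> carrier_mat N N"
    and nonzero: "\<And>j. j < N \<Longrightarrow> col S j \<noteq> 0\<^sub>v N"
    and orth: "\<And>j k. j < N \<Longrightarrow> k < N \<Longrightarrow> j \<noteq> k \<Longrightarrow> col S j \<bullet> col S k = 0"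
  shows "det S \<noteq> 0"
proof -
  define Gram where "Gram = transpose_mat S * S"
  have Gram: "Gram \<in> carrier_mat N N" using S by (simp add: Gram_def)
  have Gram_entry: "Gram $$ (j, k) = col S j \<bullet> col S k" if "j < N" "k < N" for j k
    using that S by (simp add: Gram_def)
  have "upper_triangular Gram"
    using Gram orth by (auto simp: upper_triangular_def Gram_entry)
  then have "det Gram = (\<Prod>j = 0..<N. col S j \<bullet> col S j)"
    using Gram by (simp add: det_upper_triangular prod_list_diag_prod Gram_entry)
  also have "\<dots> > 0"
    using S by (intro prod_pos) (simp add: scalar_prod_self_pos_real[OF col_carrier_vec nonzero])
  finally show "det S \<noteq> 0"
    using S by (auto simp: Gram_def det_mult[of _ N] det_transpose)
qed

lemma char_poly_eq_if_diagonalised: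
  fixes A S :: "'a :: field mat"
  assumes A: "A \<in> carrier_mat N N" and S: "S \<in> carrier_mat N N" "det S \<noteq> 0"
    and AS: "A * S = S * mat N N (\<lambda>(i, j). if i = j then d j else 0)"
  shows "char_poly A = (\<Prod>j<N. [:- d j, 1:])"
proof -
  define L where "L = mat N N (\<lambda>(i, j). if i = j then d j else 0)"
  have L: "L \<in> carrier_mat N N" by (simp add: L_def)
  obtain T where T: "T \<in> carrier_mat N N" "S * T = 1\<^sub>m N" "T * S = 1\<^sub>m N"
    using det_non_zero_imp_unit[OF S, unfolded Units_def, of "()"] by (auto simp: ring_mat_def)
  have "A * S = S * L" using AS by (simp add: L_def)
  then have "A = S * L * T"
    using A S T by (metis assoc_mult_mat right_mult_one_mat)
  then have "similar_mat A L"
    using A S L T by (intro similar_matI[of A L S T N]) auto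
  then have "char_poly A = (\<Prod>a\<leftarrow>diag_mat L. [:- a, 1:])"
    using char_poly_upper_triangular[OF L] by (simp add: char_poly_similar upper_triangular_def L_def)
  also have "\<dots> = (\<Prod>j<N. [:- d j, 1:])"
    by (simp add: diag_mat_def L_def prod.distinct_set_conv_list[symmetric] comp_def atLeast0LessThan)
  finally show ?thesis .
qed

lemma char_poly_orthogonal_eigenbasis:
  fixes A :: "real mat" and v :: "'i \<Rightarrow> real vec" and \<mu> :: "'i \<Rightarrow> real"
  assumes A: "A \<in> carrier_mat N N" and I: "finite I" "card I = N"
    and eig: "\<And>i. i \<in> I \<Longrightarrow> eigenvector A (v i) (\<mu> i)"
    and orth: "\<And>i j. i \<in> I \<Longrightarrow> j \<in> I \<Longrightarrow> i \<noteq> j \<Longrightarrow> v i \<bullet> v j = 0"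
  shows "char_poly A = (\<Prod>i\<in>I. [:- \<mu> i, 1:])"
proof -
  obtain e where e: "bij_betw e {..<N} I"
    using ex_bij_betw_nat_finite[OF I(1)] I(2) by (auto simp: atLeast0LessThan)
  have eI: "e j \<in> I" if "j < N" for j using e that by (auto simp: bij_betw_def)
  have e_inj: "e j \<noteq> e k" if "j < N" "k < N" "j \<noteq> k" for j k
    using e that by (auto simp: bij_betw_def dest: inj_onD)
  have v: "v (e j) \<in> carrier_vec N" "v (e j) \<noteq> 0\<^sub>v N" "A *\<^sub>v v (e j) = \<mu> (e j) \<cdot>\<^sub>v v (e j)"
    if "j < N" for j
    using eig[OF eI[OF that]] A by (auto simp: eigenvector_def)
  define S where "S = mat N N (\<lambda>(r, j). v (e j) $ r)"
  have S: "S \<in> carrier_mat N N" by (simp add: S_def)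
  have col_S: "col S j = v (e j)" if "j < N" for j
    using v(1)[OF that] that by (auto simp: S_def)
  have "A * S = S * mat N N (\<lambda>(i, j). if i = j then \<mu> (e j) else 0)"
  proof (rule eq_matI)
    fix i j assume "i < dim_row (S * mat N N (\<lambda>(i, j). if i = j then \<mu> (e j) else 0))"
      "j < dim_col (S * mat N N (\<lambda>(i, j). if i = j then \<mu> (e j) else 0))"
    then have i: "i < N" and j: "j < N" by (simp_all add: S_def)
    have "(A * S) $$ (i, j) = (A *\<^sub>v v (e j)) $ i"
      using A S i j by (simp add: col_S)
    also have "\<dots> = \<mu> (e j) * v (e j) $ i" using v[OF j] i by simp
    also have "\<dots> = (\<Sum>k<N. S $$ (i, k) * (if k = j then \<mu> (e j) else 0))"
      using i j by (simp add: if_distrib[where f = "\<lambda>x. _ * x"] S_def cong: if_cong)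
    also have "\<dots> = (S * mat N N (\<lambda>(i, j). if i = j then \<mu> (e j) else 0)) $$ (i, j)"
      using i j by (simp add: S_def scalar_prod_def atLeast0LessThan)
    finally show "(A * S) $$ (i, j) = (S * mat N N (\<lambda>(i, j). if i = j then \<mu> (e j) else 0)) $$ (i, j)" .
  qed (use A S in auto)
  moreover have "det S \<noteq> 0"
    using S v orth eI e_inj by (intro det_ne_zero_if_orthogonal_cols) (auto simp: col_S)
  ultimately have "char_poly A = (\<Prod>j<N. [:- \<mu> (e j), 1:])"
    using A S by (intro char_poly_eq_if_diagonalised) auto
  also have "\<dots> = (\<Prod>i\<in>I. [:- \<mu> i, 1:])"
    by (rule prod.reindex_bij_betw[OF e])
  finally show ?thesis .
qed

lemma char_poly_mat_relabel:
  fixes f :: "nat \<Rightarrow> nat \<Rightarrow> 'a :: comm_ring_1"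
  assumes \<sigma>: "bij_betw \<sigma> {..<N} {..<N}"
  shows "char_poly (mat N N (\<lambda>(i, j). f (\<sigma> i) (\<sigma> j))) = char_poly (mat N N (\<lambda>(i, j). f i j))"
proof -
  define P :: "'a mat" where "P = mat N N (\<lambda>(i, k). if \<sigma> i = k then 1 else 0)"
  define Q :: "'a mat" where "Q = mat N N (\<lambda>(k, j). if \<sigma> j = k then 1 else 0)"
  have \<sigma>_lt: "\<sigma> i < N" if "i < N" for i using \<sigma> that by (auto simp: bij_betw_def)
  have \<sigma>_eq: "\<sigma> i = \<sigma> j \<longleftrightarrow> i = j" if "i < N" "j < N" for i j
    using \<sigma> that by (auto simp: bij_betw_def dest: inj_onD)
  have delta: "(\<Sum>k<N. (if m = k then 1 else 0) * g k) = g m" if "m < N" for m and g :: "nat \<Rightarrow> 'a"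
    using that by (simp add: if_distrib[where f = "\<lambda>x. x * _"] cong: if_cong)
  have PQ: "P * Q = 1\<^sub>m N"
  proof (rule eq_matI)
    fix i j assume "i < dim_row (1\<^sub>m N :: 'a mat)" "j < dim_col (1\<^sub>m N :: 'a mat)"
    then have ij: "i < N" "j < N" by simp_all
    have "(P * Q) $$ (i, j) = (\<Sum>k<N. (if \<sigma> i = k then 1 else 0) * (if \<sigma> j = k then 1 else 0))"
      using ij by (simp add: P_def Q_def scalar_prod_def atLeast0LessThan)
    also have "\<dots> = (if \<sigma> j = \<sigma> i then 1 else 0)" by (rule delta) (use ij \<sigma>_lt in simp)
    finally show "(P * Q) $$ (i, j) = 1\<^sub>m N $$ (i, j)" using ij \<sigma>_eq by simp
  qed (simp_all add: P_def Q_def)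
  have QP: "Q * P = 1\<^sub>m N"
  proof (rule eq_matI)
    fix k l assume "k < dim_row (1\<^sub>m N :: 'a mat)" "l < dim_col (1\<^sub>m N :: 'a mat)"
    then have kl: "k < N" "l < N" by simp_all
    have "(Q * P) $$ (k, l) = (\<Sum>i<N. (if k = \<sigma> i then 1 else 0) * (if \<sigma> i = l then 1 else 0))"
      using kl by (simp add: P_def Q_def scalar_prod_def atLeast0LessThan eq_commute)
    also have "\<dots> = (\<Sum>m<N. (if k = m then 1 else 0) * (if m = l then 1 else 0))"
      by (rule sum.reindex_bij_betw[OF \<sigma>])
    also have "\<dots> = (if k = l then 1 else 0)" by (rule delta) (use kl in simp)
    finally show "(Q * P) $$ (k, l) = 1\<^sub>m N $$ (k, l)" using kl by simp
  qed (simp_all add: P_def Q_def)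
  have "mat N N (\<lambda>(i, j). f (\<sigma> i) (\<sigma> j)) = P * mat N N (\<lambda>(i, j). f i j) * Q"
  proof (rule eq_matI)
    fix i j assume "i < dim_row (P * mat N N (\<lambda>(i, j). f i j) * Q)"
      "j < dim_col (P * mat N N (\<lambda>(i, j). f i j) * Q)"
    then have ij: "i < N" "j < N" by (simp_all add: P_def Q_def)
    have row: "(P * mat N N (\<lambda>(i, j). f i j)) $$ (i, k) = f (\<sigma> i) k" if "k < N" for k
      using ij that delta[of "\<sigma> i" "\<lambda>m. f m k"] \<sigma>_lt
      by (simp add: P_def scalar_prod_def atLeast0LessThan)
    have "(P * mat N N (\<lambda>(i, j). f i j) * Q) $$ (i, j)
        = (\<Sum>k<N. f (\<sigma> i) k * (if \<sigma> j = k then 1 else 0))"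
      using ij row by (simp add: Q_def P_def scalar_prod_def atLeast0LessThan)
    also have "\<dots> = f (\<sigma> i) (\<sigma> j)"
      using delta[of "\<sigma> j" "f (\<sigma> i)"] \<sigma>_lt[OF ij(2)] by (simp add: mult.commute)
    finally show "mat N N (\<lambda>(i, j). f (\<sigma> i) (\<sigma> j)) $$ (i, j) = (P * mat N N (\<lambda>(i, j). f i j) * Q) $$ (i, j)"
      using ij by simp
  qed (simp_all add: P_def Q_def)
  then have "similar_mat (mat N N (\<lambda>(i, j). f (\<sigma> i) (\<sigma> j))) (mat N N (\<lambda>(i, j). f i j))"
    using PQ QP by (intro similar_matI[of _ _ P Q N]) (auto simp: P_def Q_def)
  then show ?thesis by (rule char_poly_similar)
qed

section \<open>The distance matrix of a complete multipartite graph\<close>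

definition helmert :: "nat \<Rightarrow> nat \<Rightarrow> real" where
  "helmert m i = (if i < m then 1 else if i = m then - real m else 0)"

lemma sum_helmert: "m < L \<Longrightarrow> (\<Sum>i<L. helmert m i) = 0"
proof (induction L)
  case (Suc L)
  show ?case
  proof (cases "m < L")
    case True
    then show ?thesis using Suc by (simp add: helmert_def)
  next
    case False
    then have "L = m" using Suc.prems by simp
    moreover have "(\<Sum>i<m. helmert m i) = real m" by (simp add: helmert_def)
    ultimately show ?thesis by (simp add: helmert_def)
  qed
qed simp

lemma helmert_orthogonal:
  assumes "m \<noteq> m'" "m < L" "m' < L"
  shows "(\<Sum>i<L. helmert m i * helmert m' i) = 0"
proof -
  have *: "(\<Sum>i<L. helmert m i * helmert m' i) = 0" if "m < m'" "m < L" for m m'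
  proof -
    have "(\<Sum>i<L. helmert m i * helmert m' i) = (\<Sum>i<L. helmert m i)"
      by (rule sum.cong) (use that in \<open>auto simp: helmert_def\<close>)
    then show ?thesis using sum_helmert that by simp
  qed
  show ?thesis
    using assms *[of m m'] *[of m' m] by (cases "m < m'") (simp_all add: mult.commute)
qed

lemma sum_lessThan_add: "(\<Sum>r<a + (b::nat). f r) = (\<Sum>r<a. f r) + (\<Sum>k<b. f (a + k))"
  by (induction b) (simp_all add: add.assoc)

text \<open>The complete multipartite graph with one part \<open>{0..<p}\<close> and \<open>q\<close> parts
  \<open>{p + k, p + q + k}\<close> of size two (\<open>k < q\<close>): vertices in the same part are at distance 2.\<close>
definition multipartite_part :: "nat \<Rightarrow> nat \<Rightarrow> nat \<Rightarrow> nat option" where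
  "multipartite_part p q t = (if t < p then None else Some ((t - p) mod q))"

definition multipartite_dist :: "nat \<Rightarrow> nat \<Rightarrow> nat \<Rightarrow> nat \<Rightarrow> real" where
  "multipartite_dist p q t r =
     (if t = r then 0 else if multipartite_part p q t = multipartite_part p q r then 2 else 1)"

definition multipartite_dist_mat :: "nat \<Rightarrow> nat \<Rightarrow> real mat" where
  "multipartite_dist_mat p q = mat (p + 2 * q) (p + 2 * q) (\<lambda>(t, r). multipartite_dist p q t r)"

definition block_vec :: "nat \<Rightarrow> nat \<Rightarrow> (nat \<Rightarrow> real) \<Rightarrow> (nat \<Rightarrow> real) \<Rightarrow> (nat \<Rightarrow> real) \<Rightarrow> real vec" where
  "block_vec p q u w w' =
     vec (p + 2 * q) (\<lambda>r. if r < p then u r else if r < p + q then w (r - p) else w' (r - p - q))"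

lemma block_vec_carrier [simp]: "block_vec p q u w w' \<in> carrier_vec (p + 2 * q)"
  by (simp add: block_vec_def)

lemma dim_vec_block_vec [simp]: "dim_vec (block_vec p q u w w') = p + 2 * q"
  by (simp add: block_vec_def)

lemma block_vec_index [simp]:
  "i < p \<Longrightarrow> block_vec p q u w w' $ i = u i"
  "k < q \<Longrightarrow> block_vec p q u w w' $ (p + k) = w k"
  "k < q \<Longrightarrow> block_vec p q u w w' $ (p + q + k) = w' k"
  by (simp_all add: block_vec_def)

lemma sum_block_split:
  "(\<Sum>r<p + 2 * (q::nat). f r) = (\<Sum>i<p. f i) + (\<Sum>k<q. f (p + k)) + (\<Sum>k<q. f (p + q + k))"
  using sum_lessThan_add[of f p "q + q"] sum_lessThan_add[of "\<lambda>k. f (p + k)" q q]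
  by (simp add: mult_2 add.assoc)

lemma block_index_cases:
  fixes t p q :: nat
  assumes "t < p + 2 * q"
  obtains (big) "t < p" | (fst) k where "k < q" "t = p + k" | (snd) k where "k < q" "t = p + q + k"
proof -
  consider "t < p" | "p \<le> t" "t < p + q" | "p + q \<le> t" by linarith
  then show ?thesis
  proof cases
    case 2
    then show ?thesis using that(2)[of "t - p"] by simp
  next
    case 3
    then show ?thesis using that(3)[of "t - p - q"] assms by simp
  qed (use that in blast)
qed

lemma block_vec_eqI:
  assumes "\<And>i. i < p \<Longrightarrow> u i = u' i" "\<And>k. k < q \<Longrightarrow> w k = v k" "\<And>k. k < q \<Longrightarrow> w' k = v' k"
  shows "block_vec p q u w w' = block_vec p q u' v v'"
proof (rule eq_vecI)
  fix t assume "t < dim_vec (block_vec p q u' v v')"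
  then have "t < p + 2 * q" by simp
  then show "block_vec p q u w w' $ t = block_vec p q u' v v' $ t"
    by (cases rule: block_index_cases) (simp_all add: assms)
qed simp

lemma smult_block_vec:
  "c \<cdot>\<^sub>v block_vec p q u w w' = block_vec p q (\<lambda>i. c * u i) (\<lambda>k. c * w k) (\<lambda>k. c * w' k)"
  by (rule eq_vecI) (auto simp: block_vec_def)

lemma scalar_prod_block_vec:
  "block_vec p q u w w' \<bullet> block_vec p q u' v v'
     = (\<Sum>i<p. u i * u' i) + (\<Sum>k<q. w k * v k) + (\<Sum>k<q. w' k * v' k)"
  by (simp add: scalar_prod_def atLeast0LessThan sum_block_split)

lemma multipartite_part_index [simp]:
  "i < p \<Longrightarrow> multipartite_part p q i = None"
  "k < q \<Longrightarrow> multipartite_part p q (p + k) = Some k"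
  "k < q \<Longrightarrow> multipartite_part p q (p + q + k) = Some k"
  by (simp_all add: multipartite_part_def)

lemma dim_multipartite_dist_mat [simp]:
  "dim_row (multipartite_dist_mat p q) = p + 2 * q"
  "dim_col (multipartite_dist_mat p q) = p + 2 * q"
  by (simp_all add: multipartite_dist_mat_def)

lemma multipartite_dist_mat_mult_block_vec:
  fixes p q :: nat and u w w' :: "nat \<Rightarrow> real"
  defines "U \<equiv> \<Sum>i<p. u i" and "S \<equiv> (\<Sum>i<p. u i) + (\<Sum>k<q. w k) + (\<Sum>k<q. w' k)"
  shows "multipartite_dist_mat p q *\<^sub>v block_vec p q u w w'
    = block_vec p q (\<lambda>i. S + U - 2 * u i)
        (\<lambda>k. S + w k + w' k - 2 * w k) (\<lambda>k. S + w k + w' k - 2 * w' k)"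
proof (rule eq_vecI)
  let ?b = "block_vec p q u w w'" and ?part = "multipartite_part p q"
  fix t assume "t < dim_vec (block_vec p q (\<lambda>i. S + U - 2 * u i)
    (\<lambda>k. S + w k + w' k - 2 * w k) (\<lambda>k. S + w k + w' k - 2 * w' k))"
  then have t: "t < p + 2 * q" by simp
  have "(multipartite_dist_mat p q *\<^sub>v ?b) $ t = (\<Sum>r<p + 2 * q. multipartite_dist p q t r * ?b $ r)"
    using t by (simp add: multipartite_dist_mat_def scalar_prod_def atLeast0LessThan)
  also have "\<dots> = (\<Sum>r<p + 2 * q. ?b $ r + (if ?part t = ?part r then ?b $ r else 0)
      - (if t = r then 2 * ?b $ r else 0))"
    by (rule sum.cong) (simp_all add: multipartite_dist_def)
  also have "\<dots> = (\<Sum>r<p + 2 * q. ?b $ r) + (\<Sum>r<p + 2 * q. if ?part t = ?part r then ?b $ r else 0)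
      - 2 * ?b $ t"
    using t by (simp add: sum.distrib sum_subtractf)
  also have "(\<Sum>r<p + 2 * q. ?b $ r) = S"
    by (simp add: sum_block_split S_def)
  finally have "(multipartite_dist_mat p q *\<^sub>v ?b) $ t
      = S + (\<Sum>r<p + 2 * q. if ?part t = ?part r then ?b $ r else 0) - 2 * ?b $ t" .
  with t show "(multipartite_dist_mat p q *\<^sub>v ?b) $ t = block_vec p q (\<lambda>i. S + U - 2 * u i)
    (\<lambda>k. S + w k + w' k - 2 * w k) (\<lambda>k. S + w k + w' k - 2 * w' k) $ t"
    by (cases rule: block_index_cases) (simp_all add: sum_block_split U_def)
qed (simp add: multipartite_dist_mat_def)

lemma block_vec_nonzero:
  assumes "(\<exists>i<p. u i \<noteq> 0) \<or> (\<exists>k<q. w k \<noteq> 0)"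
  shows "block_vec p q u w w' \<noteq> 0\<^sub>v (p + 2 * q)"
proof
  assume zero: "block_vec p q u w w' = 0\<^sub>v (p + 2 * q)"
  have "u i = 0" if "i < p" for i
    using arg_cong[OF zero, of "\<lambda>v. v $ i"] that by simp
  moreover have "w k = 0" if "k < q" for k
    using arg_cong[OF zero, of "\<lambda>v. v $ (p + k)"] that by simp
  ultimately show False using assms by blast
qed

text \<open>The value \<open>(\<mu> - 2q)/p\<close> of \<open>Level \<mu>\<close> on the big part is forced by the rows outside it,
  whose entries then sum to \<open>\<mu>\<close>; the rows inside the big part require \<open>\<mu>\<close> to be a root of
  \<open>\<mu>\<^sup>2 - (2p + 2q - 2)\<mu> + 2pq - 4q\<close>.\<close>
datatype multipartite_eigen = Inside nat | Swap nat | Across nat | Level real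

fun multipartite_eigvec :: "nat \<Rightarrow> nat \<Rightarrow> multipartite_eigen \<Rightarrow> real vec" where
  "multipartite_eigvec p q (Inside m) = block_vec p q (helmert m) (\<lambda>_. 0) (\<lambda>_. 0)"
| "multipartite_eigvec p q (Swap m) =
     block_vec p q (\<lambda>_. 0) (\<lambda>k. of_bool (k = m)) (\<lambda>k. - of_bool (k = m))"
| "multipartite_eigvec p q (Across m) = block_vec p q (\<lambda>_. 0) (helmert m) (helmert m)"
| "multipartite_eigvec p q (Level \<mu>) = block_vec p q (\<lambda>_. (\<mu> - 2 * q) / p) (\<lambda>_. 1) (\<lambda>_. 1)"

fun multipartite_eigval :: "multipartite_eigen \<Rightarrow> real" where
  "multipartite_eigval (Inside _) = -2"
| "multipartite_eigval (Swap _) = -2"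
| "multipartite_eigval (Across _) = 0"
| "multipartite_eigval (Level \<mu>) = \<mu>"

definition multipartite_eigen_labels :: "nat \<Rightarrow> nat \<Rightarrow> real \<Rightarrow> real \<Rightarrow> multipartite_eigen set" where
  "multipartite_eigen_labels p q \<mu>\<^sub>1 \<mu>\<^sub>2 =
     Inside ` {1..<p} \<union> Swap ` {..<q} \<union> Across ` {1..<q} \<union> {Level \<mu>\<^sub>1, Level \<mu>\<^sub>2}"

lemma multipartite_eigenvector_Level:
  fixes p q :: nat and \<mu> :: real
  assumes "p > 0" "q > 0" and root: "\<mu>\<^sup>2 - (2 * real p + 2 * real q - 2) * \<mu> + (2 * real p * real q - 4 * real q) = 0"
  shows "eigenvector (multipartite_dist_mat p q) (multipartite_eigvec p q (Level \<mu>)) \<mu>"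
proof -
  define c where "c = (\<mu> - 2 * q) / p"
  have pc: "p * c = \<mu> - 2 * q" using \<open>p > 0\<close> by (simp add: c_def)
  have "p * (\<mu> + (\<mu> - 2 * q) - 2 * c - \<mu> * c) = 2 * p * \<mu> - 2 * p * q - 2 * (p * c) - \<mu> * (p * c)"
    by (simp add: algebra_simps)
  also have "\<dots> = - (\<mu>\<^sup>2 - (2 * real p + 2 * real q - 2) * \<mu> + (2 * real p * real q - 4 * real q))"
    unfolding pc by (simp add: algebra_simps power2_eq_square)
  finally have "p * (\<mu> + (\<mu> - 2 * q) - 2 * c - \<mu> * c) = 0" using root by simp
  then have big: "\<mu> + (\<mu> - 2 * q) - 2 * c = \<mu> * c" using \<open>p > 0\<close> by simp
  have "multipartite_dist_mat p q *\<^sub>v multipartite_eigvec p q (Level \<mu>) =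
      \<mu> \<cdot>\<^sub>v multipartite_eigvec p q (Level \<mu>)"
    unfolding multipartite_eigvec.simps c_def[symmetric] multipartite_dist_mat_mult_block_vec smult_block_vec
    by (rule block_vec_eqI) (use big in \<open>simp_all add: pc\<close>)
  moreover have "multipartite_eigvec p q (Level \<mu>) \<noteq> 0\<^sub>v (p + 2 * q)"
    unfolding multipartite_eigvec.simps by (rule block_vec_nonzero) (use \<open>q > 0\<close> in auto)
  ultimately show ?thesis by (simp add: eigenvector_def)
qed

lemma multipartite_eigen_labelsE:
  assumes "j \<in> multipartite_eigen_labels p q \<mu>\<^sub>1 \<mu>\<^sub>2"
  obtains (Inside) m where "j = Inside m" "0 < m" "m < p"
    | (Swap) m where "j = Swap m" "m < q"
    | (Across) m where "j = Across m" "0 < m" "m < q"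
    | (Level) \<mu> where "j = Level \<mu>" "\<mu> = \<mu>\<^sub>1 \<or> \<mu> = \<mu>\<^sub>2"
  using assms unfolding multipartite_eigen_labels_def by fastforce

lemma multipartite_eigenvector:
  fixes p q :: nat and \<mu>\<^sub>1 \<mu>\<^sub>2 :: real
  assumes "p > 0" "q > 0" and j: "j \<in> multipartite_eigen_labels p q \<mu>\<^sub>1 \<mu>\<^sub>2"
    and roots_sum: "\<mu>\<^sub>1 + \<mu>\<^sub>2 = 2 * real p + 2 * real q - 2"
    and roots_prod: "\<mu>\<^sub>1 * \<mu>\<^sub>2 = 2 * real p * real q - 4 * real q"
  shows "eigenvector (multipartite_dist_mat p q) (multipartite_eigvec p q j) (multipartite_eigval j)"
  using j
proof (cases rule: multipartite_eigen_labelsE)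
  case (Inside m)
  have "multipartite_dist_mat p q *\<^sub>v multipartite_eigvec p q j = (-2) \<cdot>\<^sub>v multipartite_eigvec p q j"
    unfolding Inside multipartite_eigvec.simps multipartite_dist_mat_mult_block_vec smult_block_vec
    by (rule block_vec_eqI) (simp_all add: sum_helmert Inside)
  moreover have "multipartite_eigvec p q j \<noteq> 0\<^sub>v (p + 2 * q)"
    unfolding Inside multipartite_eigvec.simps
    by (rule block_vec_nonzero) (use Inside in \<open>auto simp: helmert_def\<close>)
  ultimately show ?thesis using Inside by (simp add: eigenvector_def)
next
  case (Swap m)
  have "multipartite_dist_mat p q *\<^sub>v multipartite_eigvec p q j = (-2) \<cdot>\<^sub>v multipartite_eigvec p q j"
    unfolding Swap multipartite_eigvec.simps multipartite_dist_mat_mult_block_vec smult_block_vec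
    by (rule block_vec_eqI) (simp_all add: Swap sum_negf)
  moreover have "multipartite_eigvec p q j \<noteq> 0\<^sub>v (p + 2 * q)"
    unfolding Swap multipartite_eigvec.simps by (rule block_vec_nonzero) (use Swap in auto)
  ultimately show ?thesis using Swap by (simp add: eigenvector_def)
next
  case (Across m)
  have "multipartite_dist_mat p q *\<^sub>v multipartite_eigvec p q j = 0 \<cdot>\<^sub>v multipartite_eigvec p q j"
    unfolding Across multipartite_eigvec.simps multipartite_dist_mat_mult_block_vec smult_block_vec
    by (rule block_vec_eqI) (simp_all add: sum_helmert Across)
  moreover have "multipartite_eigvec p q j \<noteq> 0\<^sub>v (p + 2 * q)"
    unfolding Across multipartite_eigvec.simps
    by (rule block_vec_nonzero) (use Across in \<open>auto simp: helmert_def\<close>)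
  ultimately show ?thesis using Across by (simp add: eigenvector_def)
next
  case (Level \<mu>)
  have "\<mu>\<^sup>2 - (\<mu>\<^sub>1 + \<mu>\<^sub>2) * \<mu> + \<mu>\<^sub>1 * \<mu>\<^sub>2 = 0"
    using Level(2) by (auto simp: power2_eq_square algebra_simps)
  then show ?thesis
    unfolding Level roots_sum roots_prod using multipartite_eigenvector_Level[OF \<open>p > 0\<close> \<open>q > 0\<close>] by simp
qed

lemma multipartite_eigvec_orthogonal:
  fixes p q :: nat and \<mu>\<^sub>1 \<mu>\<^sub>2 :: real
  assumes "p > 0" and i: "i \<in> multipartite_eigen_labels p q \<mu>\<^sub>1 \<mu>\<^sub>2"
    and j: "j \<in> multipartite_eigen_labels p q \<mu>\<^sub>1 \<mu>\<^sub>2" and "i \<noteq> j"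
    and roots_sum: "\<mu>\<^sub>1 + \<mu>\<^sub>2 = 2 * real p + 2 * real q - 2"
    and roots_prod: "\<mu>\<^sub>1 * \<mu>\<^sub>2 = 2 * real p * real q - 4 * real q"
  shows "multipartite_eigvec p q i \<bullet> multipartite_eigvec p q j = 0"
proof -
  have levels: "2 * real q + (\<mu>\<^sub>1 - 2 * real q) * (\<mu>\<^sub>2 - 2 * real q) / p = 0"
  proof -
    have "p * (2 * real q + (\<mu>\<^sub>1 - 2 * real q) * (\<mu>\<^sub>2 - 2 * real q) / p)
        = \<mu>\<^sub>1 * \<mu>\<^sub>2 - 2 * real q * (\<mu>\<^sub>1 + \<mu>\<^sub>2) + 4 * real q * real q + 2 * real p * real q"
      using \<open>p > 0\<close> by (simp add: field_simps)
    also have "\<dots> = 0" unfolding roots_sum roots_prod by (simp add: algebra_simps)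
    finally show ?thesis using \<open>p > 0\<close> by simp
  qed
  then have levels': "2 * real q + (\<mu>\<^sub>2 - 2 * real q) * (\<mu>\<^sub>1 - 2 * real q) / p = 0"
    by (simp add: mult.commute)
  from i j \<open>i \<noteq> j\<close> \<open>p > 0\<close> show ?thesis
    by (cases rule: multipartite_eigen_labelsE; cases rule: multipartite_eigen_labelsE[OF j])
      (auto simp: scalar_prod_block_vec sum_helmert helmert_orthogonal sum_distrib_left[symmetric]
        sum_distrib_right[symmetric] sum_divide_distrib[symmetric] sum_negf levels levels')
qed

lemma multipartite_eigen_labels_finite_card:
  assumes "p > 0" "q > 0" "\<mu>\<^sub>1 \<noteq> \<mu>\<^sub>2"
  shows "finite (multipartite_eigen_labels p q \<mu>\<^sub>1 \<mu>\<^sub>2)"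
    and "card (multipartite_eigen_labels p q \<mu>\<^sub>1 \<mu>\<^sub>2) = p + 2 * q"
proof -
  show "finite (multipartite_eigen_labels p q \<mu>\<^sub>1 \<mu>\<^sub>2)"
    by (simp add: multipartite_eigen_labels_def)
  have "card (multipartite_eigen_labels p q \<mu>\<^sub>1 \<mu>\<^sub>2) = (p - 1) + q + (q - 1) + 2"
    using assms unfolding multipartite_eigen_labels_def
    by (subst card_Un_disjoint; auto simp: card_image inj_on_def)+
  then show "card (multipartite_eigen_labels p q \<mu>\<^sub>1 \<mu>\<^sub>2) = p + 2 * q"
    using assms by simp
qed

lemma prod_multipartite_eigval:
  assumes "p > 0" "q > 0" "\<mu>\<^sub>1 \<noteq> \<mu>\<^sub>2"
  shows "(\<Prod>j\<in>multipartite_eigen_labels p q \<mu>\<^sub>1 \<mu>\<^sub>2. [:- multipartite_eigval j, 1:])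
    = [:2, 1:] ^ (p + q - 1) * [:0, 1:] ^ (q - 1) * [:- \<mu>\<^sub>1, 1:] * [:- \<mu>\<^sub>2, 1:]"
proof -
  have "(\<Prod>j\<in>multipartite_eigen_labels p q \<mu>\<^sub>1 \<mu>\<^sub>2. [:- multipartite_eigval j, 1:])
    = [:2, 1:] ^ (p - 1) * [:2, 1:] ^ q * [:0, 1:] ^ (q - 1) * ([:- \<mu>\<^sub>1, 1:] * [:- \<mu>\<^sub>2, 1:])"
    using assms unfolding multipartite_eigen_labels_def
    by (subst prod.union_disjoint; auto simp: prod.reindex inj_on_def)+
  also have "\<dots> = [:2, 1:] ^ (p + q - 1) * [:0, 1:] ^ (q - 1) * [:- \<mu>\<^sub>1, 1:] * [:- \<mu>\<^sub>2, 1:]"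
  proof -
    have "[:2, 1:] ^ (p + q - 1) = ([:2, 1:] ^ (p - 1) * [:2, 1:] ^ q :: real poly)"
      using \<open>p > 0\<close> by (simp flip: power_add)
    then show ?thesis by (simp only: mult.assoc)
  qed
  finally show ?thesis .
qed

theorem char_poly_multipartite_dist_mat:
  fixes p q :: nat and \<mu>\<^sub>1 \<mu>\<^sub>2 :: real
  assumes "p > 0" "q > 0"
    and roots_sum: "\<mu>\<^sub>1 + \<mu>\<^sub>2 = 2 * real p + 2 * real q - 2"
    and roots_prod: "\<mu>\<^sub>1 * \<mu>\<^sub>2 = 2 * real p * real q - 4 * real q"
  shows "char_poly (multipartite_dist_mat p q)
    = [:2, 1:] ^ (p + q - 1) * [:0, 1:] ^ (q - 1) * [:- \<mu>\<^sub>1, 1:] * [:- \<mu>\<^sub>2, 1:]"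
proof -
  have "(\<mu>\<^sub>1 - \<mu>\<^sub>2)\<^sup>2 = (\<mu>\<^sub>1 + \<mu>\<^sub>2)\<^sup>2 - 4 * (\<mu>\<^sub>1 * \<mu>\<^sub>2)"
    by (simp add: power2_eq_square algebra_simps)
  also have "\<dots> = 4 * ((real p - 1)\<^sup>2 + real q * real q + 2 * real q)"
    unfolding roots_sum roots_prod by (simp add: power2_eq_square algebra_simps)
  also have "\<dots> > 0" using \<open>q > 0\<close> by (simp add: add_nonneg_pos)
  finally have "\<mu>\<^sub>1 \<noteq> \<mu>\<^sub>2" by auto
  note labels = multipartite_eigen_labels_finite_card[OF \<open>p > 0\<close> \<open>q > 0\<close> this]
  have "char_poly (multipartite_dist_mat p q)
      = (\<Prod>j\<in>multipartite_eigen_labels p q \<mu>\<^sub>1 \<mu>\<^sub>2. [:- multipartite_eigval j, 1:])"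
    using assms
    by (intro char_poly_orthogonal_eigenbasis[OF _ labels, where v = "multipartite_eigvec p q"]
        multipartite_eigenvector
        multipartite_eigvec_orthogonal) (auto simp: multipartite_dist_mat_def)
  also have "\<dots> = [:2, 1:] ^ (p + q - 1) * [:0, 1:] ^ (q - 1) * [:- \<mu>\<^sub>1, 1:] * [:- \<mu>\<^sub>2, 1:]"
    by (rule prod_multipartite_eigval) (use assms \<open>\<mu>\<^sub>1 \<noteq> \<mu>\<^sub>2\<close> in auto)
  finally show ?thesis .
qed

section \<open>Distances in the non-commuting graph\<close>

lemma nc_dist_self:
  assumes "u \<in> nc_vertices G"
  shows "nc_dist G u u = 0"
proof -
  have "nc_walk G [u]" using assms by (simp add: nc_walk_def)
  then show ?thesis unfolding nc_dist_def by (intro Least_eq_0) (rule exI[of _ "[u]"], simp)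
qed

lemma nc_walk_short_adj:
  assumes "nc_walk G p" "length p \<le> 2" "hd p \<noteq> last p"
  shows "nc_adj G (hd p) (last p)"
proof -
  obtain a b where "p = [a, b]"
    using assms by (cases p; cases "tl p") (auto simp: nc_walk_def)
  then show ?thesis using assms by (auto simp: nc_walk_def)
qed

lemma nc_dist_adj:
  assumes "nc_adj G u v"
  shows "nc_dist G u v = 1"
  unfolding nc_dist_def
proof (rule Least_equality)
  show "\<exists>p. nc_walk G p \<and> hd p = u \<and> last p = v \<and> length p = Suc 1"
    using assms by (intro exI[of _ "[u, v]"]) (auto simp: nc_walk_def nc_adj_def less_Suc_eq)
next
  fix k assume "\<exists>p. nc_walk G p \<and> hd p = u \<and> last p = v \<and> length p = Suc k"
  then obtain p where p: "nc_walk G p" "hd p = u" "last p = v" "length p = Suc k" by blast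
  show "1 \<le> k"
    using p assms by (cases p) (auto simp: nc_adj_def Suc_le_eq split: if_splits)
qed

lemma nc_dist_common_neighbour:
  assumes "u \<noteq> v" "\<not> nc_adj G u v" "nc_adj G u w" "nc_adj G w v"
  shows "nc_dist G u v = 2"
  unfolding nc_dist_def
proof (rule Least_equality)
  show "\<exists>p. nc_walk G p \<and> hd p = u \<and> last p = v \<and> length p = Suc 2"
    using assms by (intro exI[of _ "[u, w, v]"]) (auto simp: nc_walk_def nc_adj_def less_Suc_eq)
next
  fix k assume "\<exists>p. nc_walk G p \<and> hd p = u \<and> last p = v \<and> length p = Suc k"
  then obtain p where p: "nc_walk G p" "hd p = u" "last p = v" "length p = Suc k" by blast
  show "2 \<le> k"
    using nc_walk_short_adj[OF p(1)] p(2-4) assms(1,2) by (cases "k < 2") auto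
qed

lemma char_poly_nc_dist_matrix_eq:
  assumes vs: "distinct vs" "set vs = nc_vertices G"
    and \<phi>: "bij_betw \<phi> {..<N} (nc_vertices G)"
    and dist: "\<And>r r'. r < N \<Longrightarrow> r' < N \<Longrightarrow> real (nc_dist G (\<phi> r) (\<phi> r')) = f r r'"
  shows "char_poly (nc_dist_matrix G vs) = char_poly (mat N N (\<lambda>(r, r'). f r r'))"
proof -
  have len: "length vs = N"
    using distinct_card[OF vs(1)] bij_betw_same_card[OF \<phi>] vs(2) by simp
  define \<sigma> where "\<sigma> = inv_into {..<N} \<phi> \<circ> (!) vs"
  have "bij_betw ((!) vs) {..<N} (nc_vertices G)"
    by (rule bij_betw_nth) (simp_all add: vs len)
  then have \<sigma>: "bij_betw \<sigma> {..<N} {..<N}"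
    unfolding \<sigma>_def by (rule bij_betw_trans[OF _ bij_betw_inv_into[OF \<phi>]])
  have \<phi>\<sigma>: "\<phi> (\<sigma> i) = vs ! i" if "i < N" for i
    using that len vs(2) \<phi> by (auto simp: \<sigma>_def bij_betw_def intro!: f_inv_into_f)
  have \<sigma>_lt: "\<sigma> i < N" if "i < N" for i using \<sigma> that by (auto simp: bij_betw_def)
  have "nc_dist_matrix G vs = mat N N (\<lambda>(i, j). f (\<sigma> i) (\<sigma> j))"
    by (rule eq_matI) (simp_all add: nc_dist_matrix_def len dist[symmetric] \<sigma>_lt \<phi>\<sigma>)
  then show ?thesis using char_poly_mat_relabel[OF \<sigma>] by simp
qed

lemma nc_dist_complete_multipartite:
  assumes "p > 0" "q > 0" and \<phi>: "bij_betw \<phi> {..<p + 2 * q} (nc_vertices G)"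
    and commute: "\<And>r r'. r < p + 2 * q \<Longrightarrow> r' < p + 2 * q \<Longrightarrow>
      \<phi> r \<otimes>\<^bsub>G\<^esub> \<phi> r' = \<phi> r' \<otimes>\<^bsub>G\<^esub> \<phi> r \<longleftrightarrow> multipartite_part p q r = multipartite_part p q r'"
    and r: "r < p + 2 * q" "r' < p + 2 * q"
  shows "real (nc_dist G (\<phi> r) (\<phi> r')) = multipartite_dist p q r r'"
proof -
  have V: "\<phi> s \<in> nc_vertices G" if "s < p + 2 * q" for s
    using \<phi> that by (auto simp: bij_betw_def)
  have adj: "nc_adj G (\<phi> s) (\<phi> s') \<longleftrightarrow> multipartite_part p q s \<noteq> multipartite_part p q s'"
    if "s < p + 2 * q" "s' < p + 2 * q" for s s'
    using that V commute[OF that] \<phi> by (auto simp: nc_adj_def bij_betw_def dest: inj_onD)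
  consider "r = r'" | "r \<noteq> r'" "multipartite_part p q r \<noteq> multipartite_part p q r'"
    | "r \<noteq> r'" "multipartite_part p q r = multipartite_part p q r'" by blast
  then show ?thesis
  proof cases
    case 1
    then show ?thesis using nc_dist_self[OF V[OF r(2)]] by (simp add: multipartite_dist_def)
  next
    case 2
    then show ?thesis using nc_dist_adj adj[OF r] by (simp add: multipartite_dist_def)
  next
    case 3
    \<comment> \<open>a vertex outside the common part: vertex 0 lies in the big part, vertex \<open>p\<close> does not\<close>
    define w where "w = (if r < p then p else 0)"
    have w: "w < p + 2 * q" "multipartite_part p q w \<noteq> multipartite_part p q r"
      using \<open>p > 0\<close> \<open>q > 0\<close> by (auto simp: w_def multipartite_part_def)
    have "\<phi> r \<noteq> \<phi> r'" using \<phi> r 3 by (auto simp: bij_betw_def dest: inj_onD)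
    then have "nc_dist G (\<phi> r) (\<phi> r') = 2"
      using 3 w adj r by (intro nc_dist_common_neighbour[of _ _ _ "\<phi> w"]) auto
    then show ?thesis using 3 by (simp add: multipartite_dist_def)
  qed
qed

section \<open>The generalized quaternion group\<close>

locale generalized_quaternion = group G for G :: "('a, 'b) monoid_scheme" (structure) +
  fixes x y :: 'a and n :: nat
  assumes n_ge_2: "n \<ge> 2" and x_carrier: "x \<in> carrier G" and y_carrier: "y \<in> carrier G"
    and generated: "generate G {x, y} = carrier G"
    and x_pow_2n: "x [^] (2 * n) = \<one>"
    and x_pow_n: "x [^] n = y [^] (2::nat)"
    and y_mult_x: "y \<otimes> x = inv x \<otimes> y"
    and card_carrier: "card (carrier G) = 4 * n"
begin

definition qelem :: "int \<Rightarrow> bool \<Rightarrow> 'a" where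
  "qelem a e = (if e then x [^] a \<otimes> y else x [^] a)"

lemma qelem_closed [simp]: "qelem a e \<in> carrier G"
  by (simp add: qelem_def x_carrier y_carrier)

lemma x_int_pow_mod: "x [^] a = x [^] (a mod (2 * int n))"
proof -
  have "x [^] (2 * int n) = \<one>" using x_pow_2n int_pow_int[of G x "2 * n"] by simp
  then have "x [^] (2 * int n * (a div (2 * int n))) = \<one>"
    by (simp add: int_pow_pow[OF x_carrier, symmetric])
  moreover have "x [^] a = x [^] (2 * int n * (a div (2 * int n))) \<otimes> x [^] (a mod (2 * int n))"
    by (metis div_mult_mod_eq int_pow_mult mult.commute x_carrier)
  ultimately show ?thesis by (simp add: x_carrier)
qed

lemma y_mult_x_pow: "y \<otimes> x [^] (k::nat) = inv x [^] k \<otimes> y"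
proof (induction k)
  case 0
  then show ?case using y_carrier by simp
next
  case (Suc k)
  have "y \<otimes> x [^] Suc k = (y \<otimes> x [^] k) \<otimes> x" using x_carrier y_carrier by (simp add: m_assoc)
  also have "\<dots> = inv x [^] k \<otimes> (y \<otimes> x)" using Suc x_carrier y_carrier by (simp add: m_assoc)
  also have "\<dots> = inv x [^] Suc k \<otimes> y" using x_carrier y_carrier by (simp add: y_mult_x m_assoc)
  finally show ?case .
qed

lemma y_mult_x_int_pow: "y \<otimes> x [^] (b::int) = x [^] (- b) \<otimes> y"
proof -
  define k where "k = nat (b mod (2 * int n))"
  have bk: "b mod (2 * int n) = int k" using n_ge_2 by (simp add: k_def)
  have "x [^] b = x [^] k" using x_int_pow_mod[of b] bk by (simp add: int_pow_int)
  moreover have "x [^] (- b) = inv x [^] k"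
  proof -
    have "(- b) mod (2 * int n) = (- int k) mod (2 * int n)" using bk by (metis mod_minus_eq)
    then have "x [^] (- b) = x [^] (- int k)" using x_int_pow_mod[of "- b"] x_int_pow_mod[of "- int k"] by simp
    then show ?thesis using x_carrier by (simp add: int_pow_neg_int nat_pow_inv)
  qed
  ultimately show ?thesis using y_mult_x_pow by simp
qed

lemma y_mult_y: "y \<otimes> y = x [^] int n"
  using x_pow_n y_carrier by (simp add: int_pow_int numeral_2_eq_2)

lemma x_int_pow_diff: "x [^] (a::int) \<otimes> x [^] (- b) = x [^] (a - b)"
  by (simp add: int_pow_mult[OF x_carrier, symmetric])

lemma qelem_mult:
  "qelem a e \<otimes> qelem b f = qelem (a + (if e then - b else b) + (if e \<and> f then int n else 0)) (e \<noteq> f)"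
proof (cases e; cases f)
  assume "e" "f"
  have "(x [^] a \<otimes> y) \<otimes> (x [^] b \<otimes> y) = x [^] a \<otimes> (y \<otimes> x [^] b) \<otimes> y"
    using x_carrier y_carrier by (simp add: m_assoc)
  also have "\<dots> = x [^] a \<otimes> x [^] (- b) \<otimes> (y \<otimes> y)"
    using x_carrier y_carrier by (simp add: y_mult_x_int_pow m_assoc)
  also have "\<dots> = x [^] (a - b) \<otimes> x [^] int n"
    using x_carrier y_carrier by (simp add: x_int_pow_diff y_mult_y)
  also have "\<dots> = x [^] (a - b + int n)"
    by (rule int_pow_mult[OF x_carrier, symmetric])
  finally show ?thesis using \<open>e\<close> \<open>f\<close> by (simp add: qelem_def)
next
  assume "e" "\<not> f"
  have "(x [^] a \<otimes> y) \<otimes> x [^] b = x [^] a \<otimes> (y \<otimes> x [^] b)"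
    using x_carrier y_carrier by (simp add: m_assoc)
  also have "\<dots> = x [^] (a - b) \<otimes> y"
    using x_carrier y_carrier by (simp add: y_mult_x_int_pow x_int_pow_diff m_assoc[symmetric])
  finally show ?thesis using \<open>e\<close> \<open>\<not> f\<close> by (simp add: qelem_def)
next
  assume "\<not> e" "f"
  have "x [^] a \<otimes> (x [^] b \<otimes> y) = x [^] (a + b) \<otimes> y"
    using x_carrier y_carrier by (simp add: m_assoc int_pow_mult)
  then show ?thesis using \<open>\<not> e\<close> \<open>f\<close> by (simp add: qelem_def)
next
  assume "\<not> e" "\<not> f"
  then show ?thesis using x_carrier by (simp add: qelem_def int_pow_mult)
qed

lemma qelem_mod: "qelem a e = qelem (a mod (2 * int n)) e"
  unfolding qelem_def using x_int_pow_mod[of a] by simp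

definition qelem_range :: "(int \<times> bool) set" where
  "qelem_range = {0..<2 * int n} \<times> UNIV"

lemma carrier_eq_qelem_range: "carrier G = case_prod qelem ` qelem_range"
proof
  define Q where "Q = case_prod qelem ` qelem_range"
  show "Q \<subseteq> carrier G" by (auto simp: Q_def)
  have qelem_in: "qelem a e \<in> Q" for a e
    unfolding Q_def using n_ge_2
    by (intro image_eqI[of _ _ "(a mod (2 * int n), e)"]) (auto simp: qelem_range_def qelem_mod[of a])
  have "u \<in> Q" if "u \<in> generate G {x, y}" for u
    using that
  proof (induction rule: generate.induct)
    case one
    show ?case using qelem_in[of 0 False] by (simp add: qelem_def)
  next
    case (incl h)
    have "x \<in> Q" "y \<in> Q" using qelem_in[of 1 False] qelem_in[of 0 True] x_carrier y_carrier
      by (simp_all add: qelem_def)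
    with incl show ?case by blast
  next
    case (inv h)
    have "qelem (int n) True = inv y"
    proof (rule inv_equality[symmetric])
      have "qelem (int n) True \<otimes> y = x [^] n \<otimes> x [^] n"
        using x_carrier y_carrier by (simp add: qelem_def m_assoc y_mult_y int_pow_int)
      also have "\<dots> = \<one>" using x_pow_2n by (simp add: nat_pow_mult x_carrier mult_2)
      finally show "qelem (int n) True \<otimes> y = \<one>" .
    qed (use y_carrier in auto)
    moreover have "qelem (- 1) False = inv x" using x_carrier by (simp add: qelem_def int_pow_neg)
    ultimately show ?case using inv qelem_in[of "- 1" False] qelem_in[of "int n" True] by auto
  next
    case (eng h1 h2)
    then obtain a e b f where "h1 = qelem a e" "h2 = qelem b f" by (auto simp: Q_def)
    then show ?case by (simp add: qelem_mult qelem_in)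
  qed
  then show "carrier G \<subseteq> Q" using generated by blast
qed

lemma inj_on_qelem_range: "inj_on (case_prod qelem) qelem_range"
proof (rule eq_card_imp_inj_on)
  have "card qelem_range = 4 * n" by (simp add: qelem_range_def)
  then show "card (case_prod qelem ` qelem_range) = card qelem_range"
    using carrier_eq_qelem_range card_carrier by simp
qed (simp add: qelem_range_def)

lemma qelem_eq_iff: "qelem a e = qelem b f \<longleftrightarrow> e = f \<and> a mod (2 * int n) = b mod (2 * int n)"
proof -
  have range: "(a mod (2 * int n), e) \<in> qelem_range" "(b mod (2 * int n), f) \<in> qelem_range"
    using n_ge_2 by (simp_all add: qelem_range_def)
  have "qelem (a mod (2 * int n)) e = qelem (b mod (2 * int n)) f
      \<longleftrightarrow> (a mod (2 * int n), e) = (b mod (2 * int n), f)"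
    using inj_on_eq_iff[OF inj_on_qelem_range range] by simp
  then show ?thesis by (auto simp: qelem_mod[of a] qelem_mod[of b])
qed

lemma qelem_commute_iff:
  "qelem a e \<otimes> qelem b f = qelem b f \<otimes> qelem a e \<longleftrightarrow>
     (if e then (if f then int n dvd a - b else int n dvd b) else (if f then int n dvd a else True))"
proof -
  have dvd2: "2 * int n dvd 2 * c \<longleftrightarrow> int n dvd c" for c :: int by simp
  have "qelem a e \<otimes> qelem b f = qelem b f \<otimes> qelem a e \<longleftrightarrow>
      2 * int n dvd (a + (if e then - b else b) + (if e \<and> f then int n else 0))
        - (b + (if f then - a else a) + (if e \<and> f then int n else 0))"
    by (auto simp: qelem_mult qelem_eq_iff mod_eq_dvd_iff)
  also have "\<dots> \<longleftrightarrow>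
      (if e then (if f then int n dvd a - b else int n dvd b) else (if f then int n dvd a else True))"
    using dvd2[of "a - b"] dvd2[of "- b"] dvd2[of a] by (cases e; cases f) (simp_all add: algebra_simps)
  finally show ?thesis .
qed

lemma qelem_central_iff: "(\<forall>g\<in>carrier G. qelem a e \<otimes> g = g \<otimes> qelem a e) \<longleftrightarrow> \<not> e \<and> int n dvd a"
proof
  assume central: "\<forall>g\<in>carrier G. qelem a e \<otimes> g = g \<otimes> qelem a e"
  have "\<not> int n dvd 1" using n_ge_2 by simp
  then have "\<not> e" using central[rule_format, of "qelem 1 False"] by (auto simp: qelem_commute_iff)
  moreover have "int n dvd a"
    using central[rule_format, of "qelem 0 True"] \<open>\<not> e\<close> by (simp add: qelem_commute_iff)
  ultimately show "\<not> e \<and> int n dvd a" ..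
next
  assume "\<not> e \<and> int n dvd a"
  then show "\<forall>g\<in>carrier G. qelem a e \<otimes> g = g \<otimes> qelem a e"
    using carrier_eq_qelem_range by (auto simp: qelem_commute_iff)
qed

lemma qelem_in_nc_vertices_iff: "qelem a e \<in> nc_vertices G \<longleftrightarrow> e \<or> \<not> int n dvd a"
  by (auto simp: nc_vertices_def grp_center_def qelem_central_iff)

text \<open>The vertices \<open>0, \<dots>, 2n - 3\<close> are the non-central powers \<open>x\<^sup>a\<close> (\<open>a \<noteq> 0, n\<close>), and vertex
  \<open>2n - 2 + a\<close> is \<open>x\<^sup>a y\<close>; so the parts of size two are the pairs \<open>{x\<^sup>a y, x\<^sup>a\<^sup>+\<^sup>n y}\<close>.\<close>
definition vertex_label :: "nat \<Rightarrow> int \<times> bool" where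
  "vertex_label r = (if r < 2 * n - 2 then (int (if r < n - 1 then r + 1 else r + 2), False)
     else (int (r - (2 * n - 2)), True))"

definition vertex :: "nat \<Rightarrow> 'a" where
  "vertex r = case_prod qelem (vertex_label r)"

lemma not_dvd_rotation_exponent:
  assumes "r < 2 * n - 2"
  shows "\<not> int n dvd int (if r < n - 1 then r + 1 else r + 2)"
proof -
  define m where "m = (if r < n - 1 then r + 1 else r + 2)"
  have "0 < m" "m < 2 * n" "m \<noteq> n" using assms by (auto simp: m_def)
  then have "\<not> n dvd m" by (auto elim!: dvdE)
  then show ?thesis by (simp add: m_def)
qed

lemma vertex_commute_iff:
  "vertex r \<otimes> vertex r' = vertex r' \<otimes> vertex r \<longleftrightarrow>
     multipartite_part (2 * n - 2) n r = multipartite_part (2 * n - 2) n r'"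
proof -
  have mod_iff: "int n dvd int a - int b \<longleftrightarrow> a mod n = b mod n" for a b
    by (metis mod_eq_dvd_iff of_nat_eq_iff zmod_int)
  have shift: "(a - k) mod n = (b - k) mod n \<longleftrightarrow> a mod n = b mod n" if "k \<le> a" "k \<le> b" for a b k
    using that by (simp add: mod_iff[symmetric] of_nat_diff)
  show ?thesis
    using not_dvd_rotation_exponent[of r] not_dvd_rotation_exponent[of r']
    by (auto simp: vertex_def vertex_label_def multipartite_part_def qelem_commute_iff mod_iff shift)
qed

lemma inj_on_vertex: "inj_on vertex {..<2 * n - 2 + 2 * n}"
proof -
  have "inj_on vertex_label {..<2 * n - 2 + 2 * n}"
    by (auto simp: inj_on_def vertex_label_def split: if_splits)
  moreover have "vertex_label ` {..<2 * n - 2 + 2 * n} \<subseteq> qelem_range"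
    using n_ge_2 by (auto simp: vertex_label_def qelem_range_def)
  ultimately have "inj_on (case_prod qelem \<circ> vertex_label) {..<2 * n - 2 + 2 * n}"
    using inj_on_qelem_range by (blast intro: comp_inj_on inj_on_subset)
  then show ?thesis by (simp add: vertex_def[abs_def] comp_def)
qed

lemma vertex_image: "vertex ` {..<2 * n - 2 + 2 * n} = nc_vertices G"
proof
  show "vertex ` {..<2 * n - 2 + 2 * n} \<subseteq> nc_vertices G"
    using not_dvd_rotation_exponent by (auto simp: vertex_def vertex_label_def qelem_in_nc_vertices_iff)
  show "nc_vertices G \<subseteq> vertex ` {..<2 * n - 2 + 2 * n}"
  proof
    fix u assume u: "u \<in> nc_vertices G"
    then obtain a e where a: "0 \<le> a" "a < 2 * int n" and "u = qelem a e"
      using carrier_eq_qelem_range by (auto simp: nc_vertices_def qelem_range_def)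
    then have ae: "u = qelem (int (nat a)) e" "e \<or> \<not> int n dvd a"
      using u qelem_in_nc_vertices_iff by auto
    show "u \<in> vertex ` {..<2 * n - 2 + 2 * n}"
    proof (cases e)
      case True
      then have "vertex (2 * n - 2 + nat a) = u" using ae by (simp add: vertex_def vertex_label_def)
      moreover have "2 * n - 2 + nat a < 2 * n - 2 + 2 * n" using a by linarith
      ultimately show ?thesis by (metis image_eqI lessThan_iff)
    next
      case False
      then have "a \<noteq> 0" "a \<noteq> int n" using ae by auto
      define r where "r = (if a < int n then nat a - 1 else nat a - 2)"
      have "r < 2 * n - 2" "int (if r < n - 1 then r + 1 else r + 2) = a"
        using a \<open>a \<noteq> 0\<close> \<open>a \<noteq> int n\<close> by (auto simp: r_def)
      then have "vertex r = u" "r < 2 * n - 2 + 2 * n" using ae False by (simp_all add: vertex_def vertex_label_def)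
      then show ?thesis by (metis image_eqI lessThan_iff)
    qed
  qed
qed

lemma bij_betw_vertex: "bij_betw vertex {..<2 * n - 2 + 2 * n} (nc_vertices G)"
  by (simp add: bij_betw_def inj_on_vertex vertex_image)

end

theorem theorem3p1:
  fixes G :: "('a, 'b) monoid_scheme" and x y :: 'a and n :: nat and vs :: "'a list"
  assumes "group G"
    and "n \<ge> 2"
    and "x \<in> carrier G" and "y \<in> carrier G"
    and "generate G {x, y} = carrier G"
    and "x [^]\<^bsub>G\<^esub> (2 * n) = \<one>\<^bsub>G\<^esub>"
    and "x [^]\<^bsub>G\<^esub> n = y [^]\<^bsub>G\<^esub> (2::nat)"
    and "y \<otimes>\<^bsub>G\<^esub> x = inv\<^bsub>G\<^esub> x \<otimes>\<^bsub>G\<^esub> y"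
    and "finite (carrier G)" and "card (carrier G) = 4 * n"
    and "distinct vs" and "set vs = nc_vertices G"
  shows "char_poly (nc_dist_matrix G vs) =
           [:2, 1:] ^ (3 * n - 3) * [:0, 1:] ^ (n - 1)
         * [: -(3 * (real n - 1) + sqrt (5 * (real n)\<^sup>2 - 10 * real n + 9)), 1 :]
         * [: -(3 * (real n - 1) - sqrt (5 * (real n)\<^sup>2 - 10 * real n + 9)), 1 :]"
proof -
  interpret generalized_quaternion G x y n
    using assms by (simp add: generalized_quaternion_def generalized_quaternion_axioms_def)
  define s where "s = sqrt (5 * (real n)\<^sup>2 - 10 * real n + 9)"
  have "5 * (real n - 1)\<^sup>2 = 5 * (real n)\<^sup>2 - 10 * real n + 5"
    by (simp add: power2_eq_square algebra_simps)
  moreover have "0 \<le> 5 * (real n - 1)\<^sup>2" by simp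
  ultimately have s2: "s\<^sup>2 = 5 * (real n)\<^sup>2 - 10 * real n + 9"
    unfolding s_def by simp
  have "char_poly (nc_dist_matrix G vs) = char_poly (multipartite_dist_mat (2 * n - 2) n)"
    unfolding multipartite_dist_mat_def using assms(2)
    by (intro char_poly_nc_dist_matrix_eq[OF assms(11,12) bij_betw_vertex]
        nc_dist_complete_multipartite[OF _ _ bij_betw_vertex] vertex_commute_iff) auto
  also have "\<dots> = [:2, 1:] ^ (2 * n - 2 + n - 1) * [:0, 1:] ^ (n - 1)
      * [:- (3 * (real n - 1) + s), 1:] * [:- (3 * (real n - 1) - s), 1:]"
    by (rule char_poly_multipartite_dist_mat)
      (use assms(2) s2 in \<open>auto simp: of_nat_diff algebra_simps power2_eq_square\<close>)
  also have "2 * n - 2 + n - 1 = 3 * n - 3" by simp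
  finally show ?thesis unfolding s_def .
qed

end
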